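(* Let $\Sigma$ be a polynomial orbit-finite set, $M$ an orbit-finite monoid and $h:\Sigma^*\to M$ an equivariant homomorphism satisfying ( * ): every $x\in M$ has a letter representation. Then there is an equivariant function $g:\Sigma\times\Sigma\to\Sigma$ such that for all $a,b\in\Sigma$, $g(a,b)$ is a letter representation of $h(ab)$.
   Context: Atoms $\mathbb A$ are a countably infinite set; atom automorphisms are its bijections; polynomial orbit-finite sets are built from $\mathbb A$ and singletons by finite products and disjoint unions. $x$ is supported by $\bar a$ if every automorphism fixing $\bar a$ pointwise fixes $x$; equivariant means supported by the empty tuple (for functions: $f(\pi x)=\pi f(x)$). The least support of $x$ is the non-repeating tuple supporting $x$ whose atoms occur in every tuple supporting $x$. An orbit-finite monoid has an orbit-finite underlying set (elements finitely supported, finitely many orbits of the automorphisms fixing some tuple) and finitely supported multiplication. A letter representation of $x\in M$ is a letter $a\in\Sigma$ with $h(a)=x$ and the same least support as $x$. *)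

theory Defs
  imports Main
begin

text \<open>Atoms are the natural numbers (a countably infinite set); atom automorphisms
are arbitrary bijections of the atoms.\<close>

type_synonym atom = nat

definition fixes_tuple :: "(atom \<Rightarrow> atom) \<Rightarrow> atom list \<Rightarrow> bool" where
  "fixes_tuple \<pi> as \<longleftrightarrow> bij \<pi> \<and> (\<forall>a\<in>set as. \<pi> a = a)"

definition is_action :: "((atom \<Rightarrow> atom) \<Rightarrow> 'x \<Rightarrow> 'x) \<Rightarrow> bool" where
  "is_action act \<longleftrightarrow> (\<forall>x. act id x = x) \<and>
     (\<forall>\<pi> \<sigma> x. bij \<pi> \<longrightarrow> bij \<sigma> \<longrightarrow> act (\<pi> \<circ> \<sigma>) x = act \<pi> (act \<sigma> x))"

definition supports :: "((atom \<Rightarrow> atom) \<Rightarrow> 'x \<Rightarrow> 'x) \<Rightarrow> atom list \<Rightarrow> 'x \<Rightarrow> bool" where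
  "supports act as x \<longleftrightarrow> (\<forall>\<pi>. fixes_tuple \<pi> as \<longrightarrow> act \<pi> x = x)"

definition fin_supp :: "((atom \<Rightarrow> atom) \<Rightarrow> 'x \<Rightarrow> 'x) \<Rightarrow> 'x \<Rightarrow> bool" where
  "fin_supp act x \<longleftrightarrow> (\<exists>as. supports act as x)"

definition is_least_supp :: "((atom \<Rightarrow> atom) \<Rightarrow> 'x \<Rightarrow> 'x) \<Rightarrow> 'x \<Rightarrow> atom list \<Rightarrow> bool" where
  "is_least_supp act x as \<longleftrightarrow> distinct as \<and> supports act as x \<and>
     (\<forall>bs. supports act bs x \<longrightarrow> set as \<subseteq> set bs)"

datatype poly = PAtoms | PUnit | PProd poly poly | PSum poly poly

datatype val = VAtom atom | VUnit | VPair val val | VInl val | VInr val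

fun in_poly :: "val \<Rightarrow> poly \<Rightarrow> bool" where
  "in_poly (VAtom a) PAtoms = True"
| "in_poly VUnit PUnit = True"
| "in_poly (VPair u v) (PProd p q) = (in_poly u p \<and> in_poly v q)"
| "in_poly (VInl u) (PSum p q) = in_poly u p"
| "in_poly (VInr v) (PSum p q) = in_poly v q"
| "in_poly _ _ = False"

definition poly_set :: "poly \<Rightarrow> val set" where
  "poly_set p = {v. in_poly v p}"

fun vact :: "(atom \<Rightarrow> atom) \<Rightarrow> val \<Rightarrow> val" where
  "vact \<pi> (VAtom a) = VAtom (\<pi> a)"
| "vact \<pi> VUnit = VUnit"
| "vact \<pi> (VPair u v) = VPair (vact \<pi> u) (vact \<pi> v)"
| "vact \<pi> (VInl u) = VInl (vact \<pi> u)"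
| "vact \<pi> (VInr u) = VInr (vact \<pi> u)"

definition orbit_finite :: "((atom \<Rightarrow> atom) \<Rightarrow> 'x \<Rightarrow> 'x) \<Rightarrow> 'x set \<Rightarrow> bool" where
  "orbit_finite act X \<longleftrightarrow> (\<forall>x\<in>X. fin_supp act x) \<and>
     (\<exists>as. (\<forall>\<pi> x. fixes_tuple \<pi> as \<longrightarrow> x \<in> X \<longrightarrow> act \<pi> x \<in> X) \<and>
           finite ((\<lambda>x. {act \<pi> x | \<pi>. fixes_tuple \<pi> as}) ` X))"

definition monoid_on :: "'x set \<Rightarrow> ('x \<Rightarrow> 'x \<Rightarrow> 'x) \<Rightarrow> 'x \<Rightarrow> bool" where
  "monoid_on M mult e \<longleftrightarrow> e \<in> M \<and> (\<forall>x\<in>M. \<forall>y\<in>M. mult x y \<in> M) \<and>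
     (\<forall>x\<in>M. \<forall>y\<in>M. \<forall>z\<in>M. mult (mult x y) z = mult x (mult y z)) \<and>
     (\<forall>x\<in>M. mult e x = x \<and> mult x e = x)"

definition orbit_finite_monoid ::
  "((atom \<Rightarrow> atom) \<Rightarrow> 'x \<Rightarrow> 'x) \<Rightarrow> 'x set \<Rightarrow> ('x \<Rightarrow> 'x \<Rightarrow> 'x) \<Rightarrow> 'x \<Rightarrow> bool" where
  "orbit_finite_monoid act M mult e \<longleftrightarrow> is_action act \<and> monoid_on M mult e \<and>
     orbit_finite act M \<and>
     (\<exists>as. \<forall>\<pi>. fixes_tuple \<pi> as \<longrightarrow>
        (\<forall>x\<in>M. \<forall>y\<in>M. act \<pi> (mult x y) = mult (act \<pi> x) (act \<pi> y)))"

definition equivariant_hom ::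
  "poly \<Rightarrow> ((atom \<Rightarrow> atom) \<Rightarrow> 'x \<Rightarrow> 'x) \<Rightarrow> 'x set \<Rightarrow> ('x \<Rightarrow> 'x \<Rightarrow> 'x) \<Rightarrow> 'x
    \<Rightarrow> (val list \<Rightarrow> 'x) \<Rightarrow> bool" where
  "equivariant_hom \<Sigma> act M mult e h \<longleftrightarrow>
     (\<forall>w. set w \<subseteq> poly_set \<Sigma> \<longrightarrow> h w \<in> M) \<and>
     h [] = e \<and>
     (\<forall>u v. set u \<subseteq> poly_set \<Sigma> \<longrightarrow> set v \<subseteq> poly_set \<Sigma> \<longrightarrow> h (u @ v) = mult (h u) (h v)) \<and>
     (\<forall>\<pi> w. bij \<pi> \<longrightarrow> set w \<subseteq> poly_set \<Sigma> \<longrightarrow> h (map (vact \<pi>) w) = act \<pi> (h w))"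

definition letter_rep ::
  "poly \<Rightarrow> ((atom \<Rightarrow> atom) \<Rightarrow> 'x \<Rightarrow> 'x) \<Rightarrow> (val list \<Rightarrow> 'x) \<Rightarrow> val \<Rightarrow> 'x \<Rightarrow> bool" where
  "letter_rep \<Sigma> act h a x \<longleftrightarrow> a \<in> poly_set \<Sigma> \<and> h [a] = x \<and>
     (\<exists>as. is_least_supp vact a as \<and> is_least_supp act x as)"

end

theory Submission
  imports Defs
begin

text \<open>Choose one pair of letters in each orbit of \<open>\<Sigma> \<times> \<Sigma>\<close>, pick a letter representation \<open>c\<close>
  of \<open>h(ab)\<close> for it, and transport \<open>c\<close> to the rest of the orbit. This is well defined because
  an automorphism fixing \<open>a\<close> and \<open>b\<close> fixes the least support of \<open>h(ab)\<close>, which is contained in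
  the atoms of \<open>a\<close> and \<open>b\<close>; as it is also the least support of \<open>c\<close>, the automorphism fixes \<open>c\<close>.\<close>

lemma action_id: "is_action act \<Longrightarrow> act id x = x"
  by (simp add: is_action_def)

lemma action_comp:
  "is_action act \<Longrightarrow> bij \<pi> \<Longrightarrow> bij \<sigma> \<Longrightarrow> act (\<pi> \<circ> \<sigma>) x = act \<pi> (act \<sigma> x)"
  by (simp add: is_action_def)

lemma action_inv_left:
  assumes "is_action act" "bij \<sigma>"
  shows "act (inv \<sigma>) (act \<sigma> x) = x"
proof -
  have "act (inv \<sigma>) (act \<sigma> x) = act (inv \<sigma> \<circ> \<sigma>) x"
    using assms by (simp add: action_comp bij_imp_bij_inv)
  also have "inv \<sigma> \<circ> \<sigma> = id"
    using assms(2) by (simp add: bij_is_inj)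
  finally show ?thesis
    using action_id[OF assms(1)] by (simp add: id_def)
qed

lemma supports_action:
  assumes act: "is_action act" and "bij \<sigma>" and supp: "supports act as x"
  shows "supports act (map \<sigma> as) (act \<sigma> x)"
  unfolding supports_def
proof (intro allI impI)
  fix \<tau> assume fix_\<tau>: "fixes_tuple \<tau> (map \<sigma> as)"
  define \<rho> where "\<rho> = inv \<sigma> \<circ> \<tau> \<circ> \<sigma>"
  have "bij \<tau>"
    using fix_\<tau> by (simp add: fixes_tuple_def)
  have "bij \<rho>"
    unfolding \<rho>_def using \<open>bij \<tau>\<close> \<open>bij \<sigma>\<close> by (simp add: bij_comp bij_imp_bij_inv)
  moreover have "\<forall>a\<in>set as. \<rho> a = a"
    unfolding \<rho>_def using fix_\<tau> \<open>bij \<sigma>\<close> by (auto simp: fixes_tuple_def bij_is_inj)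
  ultimately have "act \<rho> x = x"
    using supp by (simp add: supports_def fixes_tuple_def)
  moreover have "\<tau> \<circ> \<sigma> = \<sigma> \<circ> \<rho>"
    unfolding \<rho>_def using \<open>bij \<sigma>\<close> by (auto simp: fun_eq_iff bij_is_surj surj_f_inv_f)
  ultimately show "act \<tau> (act \<sigma> x) = act \<sigma> x"
    using act \<open>bij \<sigma>\<close> \<open>bij \<tau>\<close> \<open>bij \<rho>\<close> by (metis action_comp)
qed

lemma is_least_supp_action:
  assumes act: "is_action act" and "bij \<sigma>" and least: "is_least_supp act x as"
  shows "is_least_supp act (act \<sigma> x) (map \<sigma> as)"
  unfolding is_least_supp_def
proof (intro conjI allI impI)
  show "distinct (map \<sigma> as)"
    using least \<open>bij \<sigma>\<close>
    by (simp add: is_least_supp_def distinct_map inj_on_subset[OF bij_is_inj subset_UNIV])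
  show "supports act (map \<sigma> as) (act \<sigma> x)"
    using least act \<open>bij \<sigma>\<close> supports_action by (auto simp: is_least_supp_def)
  fix bs assume "supports act bs (act \<sigma> x)"
  then have "supports act (map (inv \<sigma>) bs) x"
    using supports_action[OF act bij_imp_bij_inv[OF \<open>bij \<sigma>\<close>]] action_inv_left[OF act \<open>bij \<sigma>\<close>]
    by metis
  then have "set as \<subseteq> inv \<sigma> ` set bs"
    using least unfolding is_least_supp_def by (metis set_map)
  then have "\<sigma> ` set as \<subseteq> \<sigma> ` inv \<sigma> ` set bs"
    by blast
  also have "\<dots> = set bs"
    using \<open>bij \<sigma>\<close> by (simp add: image_comp bij_is_surj surj_f_inv_f)
  finally show "set (map \<sigma> as) \<subseteq> set bs"
    by simp
qed

lemma action_stabilizer_transport: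
  assumes actX: "is_action actX" and actY: "is_action actY"
    and "bij \<sigma>" "bij \<sigma>'" and same: "actX \<sigma> z = actX \<sigma>' z"
    and stab: "\<forall>\<tau>. bij \<tau> \<longrightarrow> actX \<tau> z = z \<longrightarrow> actY \<tau> y = y"
  shows "actY \<sigma> y = actY \<sigma>' y"
proof -
  define \<tau> where "\<tau> = inv \<sigma>' \<circ> \<sigma>"
  have "bij \<tau>"
    unfolding \<tau>_def using assms by (simp add: bij_comp bij_imp_bij_inv)
  moreover have "actX \<tau> z = z"
    unfolding \<tau>_def using assms by (simp add: action_comp bij_imp_bij_inv action_inv_left)
  ultimately have "actY \<tau> y = y"
    using stab by blast
  moreover have "\<sigma>' \<circ> \<tau> = \<sigma>"
    unfolding \<tau>_def using \<open>bij \<sigma>'\<close> by (auto simp: fun_eq_iff bij_is_surj surj_f_inv_f)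
  ultimately show ?thesis
    using actY \<open>bij \<sigma>'\<close> \<open>bij \<tau>\<close> by (metis action_comp)
qed

definition orbit :: "((atom \<Rightarrow> atom) \<Rightarrow> 'x \<Rightarrow> 'x) \<Rightarrow> 'x \<Rightarrow> 'x set" where
  "orbit act x = {act \<sigma> x | \<sigma>. bij \<sigma>}"

lemma orbit_self: "is_action act \<Longrightarrow> x \<in> orbit act x"
  unfolding orbit_def by (metis (mono_tags, lifting) CollectI action_id bij_id)

lemma orbit_action:
  assumes act: "is_action act" and "bij \<pi>"
  shows "orbit act (act \<pi> x) = orbit act x"
proof
  show "orbit act (act \<pi> x) \<subseteq> orbit act x"
    unfolding orbit_def using assms by (auto simp: action_comp[symmetric] intro: bij_comp)
  show "orbit act x \<subseteq> orbit act (act \<pi> x)"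
  proof
    fix y assume "y \<in> orbit act x"
    then obtain \<sigma> where "bij \<sigma>" "y = act \<sigma> x"
      by (auto simp: orbit_def)
    then have "y = act (\<sigma> \<circ> inv \<pi>) (act \<pi> x)" "bij (\<sigma> \<circ> inv \<pi>)"
      using assms by (simp_all add: action_comp bij_comp bij_imp_bij_inv action_inv_left)
    then show "y \<in> orbit act (act \<pi> x)"
      by (auto simp: orbit_def)
  qed
qed

lemma equivariant_choice:
  fixes actX :: "(atom \<Rightarrow> atom) \<Rightarrow> 'x \<Rightarrow> 'x" and actY :: "(atom \<Rightarrow> atom) \<Rightarrow> 'y \<Rightarrow> 'y"
  assumes actX: "is_action actX" and actY: "is_action actY"
    and closed: "\<And>\<pi> x. bij \<pi> \<Longrightarrow> x \<in> X \<Longrightarrow> actX \<pi> x \<in> X"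
    and R_action: "\<And>\<pi> x y. bij \<pi> \<Longrightarrow> x \<in> X \<Longrightarrow> R x y \<Longrightarrow> R (actX \<pi> x) (actY \<pi> y)"
    and R_stab: "\<And>x. x \<in> X \<Longrightarrow>
      \<exists>y. R x y \<and> (\<forall>\<tau>. bij \<tau> \<longrightarrow> actX \<tau> x = x \<longrightarrow> actY \<tau> y = y)"
  shows "\<exists>g. \<forall>x\<in>X. R x (g x) \<and> (\<forall>\<pi>. bij \<pi> \<longrightarrow> g (actX \<pi> x) = actY \<pi> (g x))"
proof -
  define r where "r x = (SOME z. z \<in> orbit actX x)" for x
  define c where "c z = (SOME y. R z y \<and> (\<forall>\<tau>. bij \<tau> \<longrightarrow> actX \<tau> z = z \<longrightarrow> actY \<tau> y = y))"
    for z
  define g where "g x = actY (SOME \<sigma>. bij \<sigma> \<and> x = actX \<sigma> (r x)) (c (r x))" for x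
  have r_orbit: "r x \<in> orbit actX x" for x
    unfolding r_def using orbit_self[OF actX] by (rule someI)
  have r_action: "r (actX \<pi> x) = r x" if "bij \<pi>" for \<pi> x
    unfolding r_def using orbit_action[OF actX that] by simp
  have r_transport: "\<exists>\<sigma>. bij \<sigma> \<and> x = actX \<sigma> (r x)" for x
  proof -
    obtain \<sigma> where "bij \<sigma>" "r x = actX \<sigma> x"
      using r_orbit[of x] by (auto simp: orbit_def)
    then show ?thesis
      using actX by (metis action_inv_left bij_imp_bij_inv)
  qed
  have r_in: "r x \<in> X" if "x \<in> X" for x
    using r_orbit[of x] closed that by (auto simp: orbit_def)
  have c_spec: "R (r x) (c (r x)) \<and>
      (\<forall>\<tau>. bij \<tau> \<longrightarrow> actX \<tau> (r x) = r x \<longrightarrow> actY \<tau> (c (r x)) = c (r x))" if "x \<in> X" for x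
    unfolding c_def using R_stab[OF r_in[OF that]] by (rule someI_ex)
  have g_transport: "g x = actY \<sigma> (c (r x))"
    if "x \<in> X" "bij \<sigma>" "x = actX \<sigma> (r x)" for x \<sigma>
  proof -
    define \<sigma>' where "\<sigma>' = (SOME \<sigma>. bij \<sigma> \<and> x = actX \<sigma> (r x))"
    have "bij \<sigma>'" "x = actX \<sigma>' (r x)"
      using someI_ex[OF r_transport[of x]] by (auto simp: \<sigma>'_def)
    then have "actY \<sigma>' (c (r x)) = actY \<sigma> (c (r x))"
      using action_stabilizer_transport[OF actX actY] that c_spec by metis
    then show ?thesis
      by (simp add: g_def \<sigma>'_def)
  qed
  have "R x (g x) \<and> (\<forall>\<pi>. bij \<pi> \<longrightarrow> g (actX \<pi> x) = actY \<pi> (g x))" if "x \<in> X" for x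
  proof -
    obtain \<sigma> where \<sigma>: "bij \<sigma>" "x = actX \<sigma> (r x)"
      using r_transport by blast
    have "R x (g x)"
      using R_action[OF \<sigma>(1) r_in[OF that]] c_spec[OF that] g_transport[OF that \<sigma>] \<sigma>(2) by metis
    moreover have "g (actX \<pi> x) = actY \<pi> (g x)" if "bij \<pi>" for \<pi>
    proof -
      have "actX \<pi> x \<in> X"
        using closed that \<open>x \<in> X\<close> by blast
      moreover have "actX \<pi> x = actX (\<pi> \<circ> \<sigma>) (r (actX \<pi> x))"
        using \<sigma> that actX by (simp add: r_action action_comp)
      ultimately have "g (actX \<pi> x) = actY (\<pi> \<circ> \<sigma>) (c (r (actX \<pi> x)))"
        using g_transport bij_comp \<sigma>(1) that by blast
      then show ?thesis
        using g_transport[OF \<open>x \<in> X\<close> \<sigma>] actY \<sigma>(1) that by (simp add: action_comp r_action)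
    qed
    ultimately show ?thesis
      by blast
  qed
  then show ?thesis
    by blast
qed

lemma vact_id [simp]: "vact id v = v"
  by (induction v) auto

lemma vact_comp: "vact (\<pi> \<circ> \<sigma>) v = vact \<pi> (vact \<sigma> v)"
  by (induction v) auto

lemma is_action_vact: "is_action vact"
  by (simp add: is_action_def vact_comp)

lemma in_poly_vact [simp]: "in_poly (vact \<pi> v) p = in_poly v p"
  by (induction v arbitrary: p) (case_tac p; simp)+

lemma poly_set_vact [simp]: "vact \<pi> v \<in> poly_set p \<longleftrightarrow> v \<in> poly_set p"
  by (simp add: poly_set_def)

fun val_atoms :: "val \<Rightarrow> atom list" where
  "val_atoms (VAtom a) = [a]"
| "val_atoms VUnit = []"
| "val_atoms (VPair u v) = val_atoms u @ val_atoms v"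
| "val_atoms (VInl u) = val_atoms u"
| "val_atoms (VInr u) = val_atoms u"

lemma vact_fixed_iff: "vact \<tau> v = v \<longleftrightarrow> (\<forall>a\<in>set (val_atoms v). \<tau> a = a)"
  by (induction v) auto

definition prod_act ::
  "((atom \<Rightarrow> atom) \<Rightarrow> 'x \<Rightarrow> 'x) \<Rightarrow> ((atom \<Rightarrow> atom) \<Rightarrow> 'y \<Rightarrow> 'y) \<Rightarrow>
    (atom \<Rightarrow> atom) \<Rightarrow> 'x \<times> 'y \<Rightarrow> 'x \<times> 'y" where
  "prod_act act1 act2 \<pi> p = (act1 \<pi> (fst p), act2 \<pi> (snd p))"

lemma is_action_prod_act:
  "is_action act1 \<Longrightarrow> is_action act2 \<Longrightarrow> is_action (prod_act act1 act2)"
  by (simp add: is_action_def prod_act_def)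

lemma equivariant_hom_action:
  "equivariant_hom \<Sigma> act M mult e h \<Longrightarrow> bij \<pi> \<Longrightarrow> set w \<subseteq> poly_set \<Sigma> \<Longrightarrow>
    h (map (vact \<pi>) w) = act \<pi> (h w)"
  by (simp add: equivariant_hom_def)

lemma equivariant_hom_supports:
  assumes hom: "equivariant_hom \<Sigma> act M mult e h" and w: "set w \<subseteq> poly_set \<Sigma>"
  shows "supports act (concat (map val_atoms w)) (h w)"
  unfolding supports_def
proof (intro allI impI)
  fix \<rho> assume fix_\<rho>: "fixes_tuple \<rho> (concat (map val_atoms w))"
  then have "map (vact \<rho>) w = w"
    by (auto simp: fixes_tuple_def vact_fixed_iff map_idI)
  then show "act \<rho> (h w) = h w"
    using equivariant_hom_action[OF hom _ w] fix_\<rho> by (metis fixes_tuple_def)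
qed

lemma letter_rep_action:
  assumes act: "is_action act" and hom: "equivariant_hom \<Sigma> act M mult e h" and "bij \<pi>"
    and rep: "letter_rep \<Sigma> act h c x"
  shows "letter_rep \<Sigma> act h (vact \<pi> c) (act \<pi> x)"
proof -
  obtain as where c: "c \<in> poly_set \<Sigma>" "h [c] = x"
    and least: "is_least_supp vact c as" "is_least_supp act x as"
    using rep by (auto simp: letter_rep_def)
  have "h [vact \<pi> c] = act \<pi> x"
    using equivariant_hom_action[OF hom \<open>bij \<pi>\<close>, of "[c]"] c by simp
  moreover have "is_least_supp vact (vact \<pi> c) (map \<pi> as)"
    and "is_least_supp act (act \<pi> x) (map \<pi> as)"
    using is_least_supp_action[OF is_action_vact \<open>bij \<pi>\<close> least(1)]
      is_least_supp_action[OF act \<open>bij \<pi>\<close> least(2)] by auto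
  ultimately show ?thesis
    unfolding letter_rep_def using c by auto
qed

lemma letter_rep_stabilizer:
  assumes hom: "equivariant_hom \<Sigma> act M mult e h" and w: "set w \<subseteq> poly_set \<Sigma>"
    and rep: "letter_rep \<Sigma> act h c (h w)" and "bij \<tau>" and fix_w: "map (vact \<tau>) w = w"
  shows "vact \<tau> c = c"
proof -
  obtain as where least_c: "is_least_supp vact c as" and least_hw: "is_least_supp act (h w) as"
    using rep by (auto simp: letter_rep_def)
  have "set as \<subseteq> set (concat (map val_atoms w))"
    using least_hw equivariant_hom_supports[OF hom w] unfolding is_least_supp_def by blast
  moreover have "\<forall>v\<in>set w. vact \<tau> v = v"
    using fix_w map_eq_conv[of "vact \<tau>" w id] by simp
  then have "\<forall>a\<in>set (concat (map val_atoms w)). \<tau> a = a"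
    by (auto simp: vact_fixed_iff)
  ultimately have "fixes_tuple \<tau> as"
    using \<open>bij \<tau>\<close> by (auto simp: fixes_tuple_def)
  then show ?thesis
    using least_c by (simp add: is_least_supp_def supports_def)
qed

theorem mainTheorem14:
  fixes \<Sigma> :: poly
    and act :: "(atom \<Rightarrow> atom) \<Rightarrow> 'm \<Rightarrow> 'm"
    and M :: "'m set" and mult :: "'m \<Rightarrow> 'm \<Rightarrow> 'm" and e :: 'm
    and h :: "val list \<Rightarrow> 'm"
  assumes "orbit_finite_monoid act M mult e"
    and "equivariant_hom \<Sigma> act M mult e h"
    and "\<forall>x\<in>M. \<exists>a. letter_rep \<Sigma> act h a x"
  shows "\<exists>g :: val \<times> val \<Rightarrow> val.
           (\<forall>a\<in>poly_set \<Sigma>. \<forall>b\<in>poly_set \<Sigma>. g (a, b) \<in> poly_set \<Sigma>) \<and>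
           (\<forall>\<pi>. bij \<pi> \<longrightarrow> (\<forall>a\<in>poly_set \<Sigma>. \<forall>b\<in>poly_set \<Sigma>.
                g (vact \<pi> a, vact \<pi> b) = vact \<pi> (g (a, b)))) \<and>
           (\<forall>a\<in>poly_set \<Sigma>. \<forall>b\<in>poly_set \<Sigma>. letter_rep \<Sigma> act h (g (a, b)) (h [a, b]))"
proof -
  have act: "is_action act"
    using assms(1) by (simp add: orbit_finite_monoid_def)
  note hom = assms(2)
  let ?X = "poly_set \<Sigma> \<times> poly_set \<Sigma>"
  let ?R = "\<lambda>p c. letter_rep \<Sigma> act h c (h [fst p, snd p])"
  have "\<exists>g. \<forall>p\<in>?X. ?R p (g p) \<and>
      (\<forall>\<pi>. bij \<pi> \<longrightarrow> g (prod_act vact vact \<pi> p) = vact \<pi> (g p))"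
  proof (rule equivariant_choice[OF is_action_prod_act[OF is_action_vact is_action_vact]
        is_action_vact])
    fix \<pi> :: "atom \<Rightarrow> atom" and p c assume "bij \<pi>" "p \<in> ?X" "?R p c"
    then show "?R (prod_act vact vact \<pi> p) (vact \<pi> c)"
      using letter_rep_action[OF act hom] equivariant_hom_action[OF hom, of \<pi> "[fst p, snd p]"]
      by (auto simp: prod_act_def)
  next
    fix p assume "p \<in> ?X"
    then have "h [fst p, snd p] \<in> M"
      using hom by (auto simp: equivariant_hom_def)
    then obtain c where "?R p c"
      using assms(3) by blast
    then show "\<exists>c. ?R p c \<and> (\<forall>\<tau>. bij \<tau> \<longrightarrow> prod_act vact vact \<tau> p = p \<longrightarrow> vact \<tau> c = c)"
      using letter_rep_stabilizer[OF hom, of "[fst p, snd p]"] \<open>p \<in> ?X\<close>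
      by (auto simp: prod_act_def prod_eq_iff)
  qed (auto simp: prod_act_def)
  then obtain g where "\<forall>p\<in>?X. ?R p (g p) \<and>
      (\<forall>\<pi>. bij \<pi> \<longrightarrow> g (prod_act vact vact \<pi> p) = vact \<pi> (g p))"
    by blast
  then show ?thesis
    by (intro exI[of _ g]) (auto simp: prod_act_def letter_rep_def)
qed

end
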